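(* Let $\eta>0$ and consider the network (NonAut-I-$\eta$) with species $\Lambda_1,\Lambda_2$ and reactions \[ 1:\ \eta\Lambda_1+\Lambda_2\to\emptyset,\qquad 2:\ \eta\Lambda_2+\Lambda_1\to\emptyset,\qquad \emptyset\to\Lambda_1,\qquad \emptyset\to\Lambda_2 \] (the last two being constant productions), with the associated ODEs \[ \begin{cases} [\dot\Lambda_1]=P_{\Lambda_1}-\eta\, r_1([\Lambda_1],[\Lambda_2])-r_2([\Lambda_2],[\Lambda_1]),\\ [\dot\Lambda_2]=P_{\Lambda_2}-r_1([\Lambda_1],[\Lambda_2])-\eta\, r_2([\Lambda_2],[\Lambda_1]), \end{cases} \] where $r_1,r_2$ are monotone chemical functions, under the kinetic symmetry constraints $r_1\equiv r_2\equiv r$ (as functions of their ordered arguments) and $P_{\Lambda_1}=P_{\Lambda_2}=P>0$. If $\eta\neq1$, the system has the capacity for zero-eigenvalue bifurcation and thus for differentiation, with bifurcation condition $\partial_1 r=\partial_2 r$ (partial derivatives of $r$ with respect to its first and second argument, evaluated at a homogeneous steady state $[\Lambda_1]=[\Lambda_2]$). The instability motif associated to a non-autocatalytic unstable-positive feedback which generates the necessary instability is the subnetwork with species $\{\Lambda_1,\Lambda_2\}$ and reactions $\{1:\ \eta\Lambda_1+\Lambda_2\to\dots,\ 2:\ \eta\Lambda_2+\Lambda_1\to\dots\}$.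
   Context: A rate function is monotone chemical if it is nonnegative, positive exactly when all its reactant concentrations are positive, independent of non-reactant concentrations, and has positive partial derivative in each reactant concentration at positive concentrations; kinetics are parameter-rich, so the partial derivatives at a positive steady state may be prescribed as arbitrary positive numbers. Capacity for zero-eigenvalue bifurcation means there are such admissible values at a homogeneous positive steady state for which the Jacobian is singular. For a network with stoichiometric matrix $S_{mj}$ (net production of species $m$ in reaction $j$), a $k$-Child-Selection triple consists of $k$ species $\kappa$, $k$ reactions $E_\kappa$ and a bijection $J:\kappa\to E_\kappa$ such that each species in $\kappa$ is a reactant of its assigned reaction; its CS-matrix is $S[\kappa]_{ml}=S_{m,J(X_l)}$. An unstable-positive feedback is a $k\times k$ CS-matrix with $\operatorname{sign}\det=(-1)^{k-1}$ and no proper principal $k'\times k'$ submatrix with determinant of sign $(-1)^{k'-1}$; it is non-autocatalytic if it is not Metzler (some off-diagonal entry negative). Its instability motif is the subnetwork consisting of the species $\kappa$ and reactions $E_\kappa$, disregarding other species. *)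

theory Defs
  imports "HOL-Analysis.Derivative" "Jordan_Normal_Form.Determinant"
begin

text \<open>A rate function of a reaction whose reactants are exactly two species, written as a
function of the two reactant concentrations (so it is automatically independent of
non-reactant concentrations).\<close>

definition monotone_chemical2 :: "(real \<Rightarrow> real \<Rightarrow> real) \<Rightarrow> bool" where
  "monotone_chemical2 r \<longleftrightarrow>
     (\<forall>x y. x \<ge> 0 \<longrightarrow> y \<ge> 0 \<longrightarrow> r x y \<ge> 0) \<and>
     (\<forall>x y. x \<ge> 0 \<longrightarrow> y \<ge> 0 \<longrightarrow> (r x y > 0 \<longleftrightarrow> x > 0 \<and> y > 0)) \<and>
     (\<forall>x y. x > 0 \<longrightarrow> y > 0 \<longrightarrow> (\<exists>d > 0. ((\<lambda>t. r t y) has_real_derivative d) (at x))) \<and>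
     (\<forall>x y. x > 0 \<longrightarrow> y > 0 \<longrightarrow> (\<exists>d > 0. ((\<lambda>t. r x t) has_real_derivative d) (at y)))"

definition partial1 :: "(real \<Rightarrow> real \<Rightarrow> real) \<Rightarrow> real \<Rightarrow> real \<Rightarrow> real" where
  "partial1 r x y = deriv (\<lambda>t. r t y) x"

definition partial2 :: "(real \<Rightarrow> real \<Rightarrow> real) \<Rightarrow> real \<Rightarrow> real \<Rightarrow> real" where
  "partial2 r x y = deriv (\<lambda>t. r x t) y"

datatype species = L1 | L2
datatype reaction = R1 | R2 | Prod1 | Prod2

fun nonaut_stoich :: "real \<Rightarrow> species \<Rightarrow> reaction \<Rightarrow> real" where
  "nonaut_stoich \<eta> L1 R1 = - \<eta>"
| "nonaut_stoich \<eta> L2 R1 = - 1"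
| "nonaut_stoich \<eta> L1 R2 = - 1"
| "nonaut_stoich \<eta> L2 R2 = - \<eta>"
| "nonaut_stoich \<eta> L1 Prod1 = 1"
| "nonaut_stoich \<eta> L2 Prod1 = 0"
| "nonaut_stoich \<eta> L1 Prod2 = 0"
| "nonaut_stoich \<eta> L2 Prod2 = 1"

fun nonaut_reactant :: "species \<Rightarrow> reaction \<Rightarrow> bool" where
  "nonaut_reactant _ R1 = True"
| "nonaut_reactant _ R2 = True"
| "nonaut_reactant _ Prod1 = False"
| "nonaut_reactant _ Prod2 = False"

text \<open>Vector field of the ODE under the symmetry constraints r1 = r2 = r, P_L1 = P_L2 = P:
  d[L1]/dt = P - eta r([L1],[L2]) - r([L2],[L1]),  d[L2]/dt = P - r([L1],[L2]) - eta r([L2],[L1]).\<close>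
fun nonaut_field :: "real \<Rightarrow> real \<Rightarrow> (real \<Rightarrow> real \<Rightarrow> real) \<Rightarrow> (species \<Rightarrow> real) \<Rightarrow> species \<Rightarrow> real" where
  "nonaut_field \<eta> P r x L1 = P - \<eta> * r (x L1) (x L2) - r (x L2) (x L1)"
| "nonaut_field \<eta> P r x L2 = P - r (x L1) (x L2) - \<eta> * r (x L2) (x L1)"

fun sp :: "nat \<Rightarrow> species" where
  "sp 0 = L1"
| "sp _ = L2"

definition jacobian2 :: "((species \<Rightarrow> real) \<Rightarrow> species \<Rightarrow> real) \<Rightarrow> (species \<Rightarrow> real) \<Rightarrow> real mat" where
  "jacobian2 F x = mat 2 2 (\<lambda>(i, j). deriv (\<lambda>t. F (x(sp j := t)) (sp i)) (x (sp j)))"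

text \<open>Capacity for zero-eigenvalue bifurcation: for some admissible (monotone chemical) kinetics
  and some P > 0 there is a homogeneous positive steady state at which the Jacobian is singular.\<close>
definition nonaut_zero_eig_capacity :: "real \<Rightarrow> bool" where
  "nonaut_zero_eig_capacity \<eta> \<longleftrightarrow>
     (\<exists>r P c. monotone_chemical2 r \<and> P > 0 \<and> c > 0 \<and>
        (\<forall>m. nonaut_field \<eta> P r (\<lambda>_. c) m = 0) \<and>
        det (jacobian2 (nonaut_field \<eta> P r) (\<lambda>_. c)) = 0)"

text \<open>A k-CS triple: species list ks (kappa, ks!l = X_l), reaction list js with js!l = J(X_l).\<close>
definition CS_triple :: "('s \<Rightarrow> 'j \<Rightarrow> bool) \<Rightarrow> 's list \<Rightarrow> 'j list \<Rightarrow> bool" where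
  "CS_triple reac ks js \<longleftrightarrow> distinct ks \<and> distinct js \<and> length ks = length js \<and>
     (\<forall>l < length ks. reac (ks ! l) (js ! l))"

definition CS_matrix :: "('s \<Rightarrow> 'j \<Rightarrow> real) \<Rightarrow> 's list \<Rightarrow> 'j list \<Rightarrow> real mat" where
  "CS_matrix S ks js = mat (length ks) (length ks) (\<lambda>(m, l). S (ks ! m) (js ! l))"

definition principal_submatrix :: "'a mat \<Rightarrow> nat set \<Rightarrow> 'a mat" where
  "principal_submatrix A I = mat (card I) (card I)
     (\<lambda>(a, b). A $$ (sorted_list_of_set I ! a, sorted_list_of_set I ! b))"

definition unstable_positive_feedback :: "real mat \<Rightarrow> bool" where
  "unstable_positive_feedback A \<longleftrightarrow>
     (\<exists>k \<ge> 1. A \<in> carrier_mat k k \<and>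
        sgn (det A) = (-1) ^ (k - 1) \<and>
        (\<forall>I. I \<subset> {0..<k} \<and> I \<noteq> {} \<longrightarrow>
            sgn (det (principal_submatrix A I)) \<noteq> (-1) ^ (card I - 1)))"

definition Metzler :: "real mat \<Rightarrow> bool" where
  "Metzler A \<longleftrightarrow> (\<forall>i j. i < dim_row A \<longrightarrow> j < dim_col A \<longrightarrow> i \<noteq> j \<longrightarrow> A $$ (i, j) \<ge> 0)"

definition non_autocatalytic :: "real mat \<Rightarrow> bool" where
  "non_autocatalytic A \<longleftrightarrow> \<not> Metzler A"

end

theory Submission
  imports Defs
begin

text \<open>At a homogeneous state \<open>[\<Lambda>\<^sub>1] = [\<Lambda>\<^sub>2] = c\<close> the symmetry of the network makes the
Jacobian a matrix with equal diagonal entries \<open>-(\<eta> a + b)\<close> and equal off-diagonal entries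
\<open>-(\<eta> b + a)\<close>, where \<open>a, b\<close> are the two partial derivatives of \<open>r\<close> at \<open>(c, c)\<close>. Its
determinant is therefore \<open>(\<eta>\<^sup>2 - 1)(a + b)(a - b)\<close>, which for \<open>\<eta> \<noteq> 1\<close> vanishes exactly
when \<open>a = b\<close>; mass action \<open>r x y = x y\<close> realises this. The CS-matrices of \<open>{\<Lambda>\<^sub>1, \<Lambda>\<^sub>2}\<close> with
reactions 1 and 2 have the same shape, with entries \<open>-\<eta>\<close> and \<open>-1\<close>; assigning the reactions
so that the smaller of \<open>\<eta>, 1\<close> lies on the diagonal gives negative diagonal entries and a
negative determinant, i.e. a non-autocatalytic unstable-positive feedback.\<close>

definition mat2_sym :: "'a \<Rightarrow> 'a \<Rightarrow> 'a mat" where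
  "mat2_sym d e = mat 2 2 (\<lambda>(i, j). if i = j then d else e)"

lemma det_mat2_sym: "det (mat2_sym d e) = (d - e) * (d + e :: 'a :: comm_ring_1)"
proof -
  let ?A = "mat2_sym d e"
  have "det ?A = (\<Sum>i<2. ?A $$ (i, 0) * cofactor ?A i 0)"
    by (rule laplace_expansion_column) (auto simp: mat2_sym_def)
  also have "\<dots> = d * d - e * e"
    by (simp add: mat2_sym_def cofactor_def numeral_2_eq_2 det_single mat_delete_def)
  finally show ?thesis
    by (simp add: algebra_simps)
qed

lemma proper_nonempty_subset_two:
  assumes "I \<subset> {0..<2 :: nat}" and "I \<noteq> {}"
  shows "I = {0} \<or> I = {1}"
proof -
  have "I \<subseteq> {0, 1}" "\<not> {0, 1} \<subseteq> I"
    using assms by (auto simp: less_2_cases_iff)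
  then show ?thesis
    using assms(2) by blast
qed

lemma det_principal_submatrix_singleton:
  "det (principal_submatrix A {i}) = A $$ (i, i)"
  by (simp add: principal_submatrix_def det_single)

lemma unstable_positive_feedback_mat2_sym:
  fixes d e :: real
  assumes "0 < d" and "d < e"
  shows "unstable_positive_feedback (mat2_sym (- d) (- e))"
  unfolding unstable_positive_feedback_def
proof (intro exI[of _ 2] conjI allI impI)
  have "(- d + e) * (- d - e) < 0"
    using assms by (intro mult_pos_neg) auto
  then show "sgn (det (mat2_sym (- d) (- e))) = (-1) ^ (2 - 1)"
    by (simp add: det_mat2_sym)
next
  fix I :: "nat set"
  assume "I \<subset> {0..<2} \<and> I \<noteq> {}"
  then have "I = {0} \<or> I = {1}"
    by (intro proper_nonempty_subset_two) auto
  then obtain i :: nat where "I = {i}" "i < 2"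
    by auto
  moreover have "mat2_sym (- d) (- e) $$ (i, i) = - d"
    using \<open>i < 2\<close> by (simp add: mat2_sym_def)
  ultimately show "sgn (det (principal_submatrix (mat2_sym (- d) (- e)) I)) \<noteq> (-1) ^ (card I - 1)"
    using assms by (simp add: det_principal_submatrix_singleton)
next
  show "mat2_sym (- d) (- e) \<in> carrier_mat 2 2"
    by (simp add: mat2_sym_def)
next
  show "(1::nat) \<le> 2"
    by simp
qed

lemma not_Metzler_mat2_sym:
  assumes "e < 0"
  shows "\<not> Metzler (mat2_sym d e)"
proof -
  have "0 < dim_row (mat2_sym d e)" "1 < dim_col (mat2_sym d e)" "\<not> 0 \<le> mat2_sym d e $$ (0, 1)"
    using assms by (simp_all add: mat2_sym_def)
  then show ?thesis
    unfolding Metzler_def by (metis zero_neq_one)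
qed

lemma monotone_chemical2_partial1:
  assumes "monotone_chemical2 r" and "0 < x" and "0 < y"
  shows "((\<lambda>t. r t y) has_real_derivative partial1 r x y) (at x)" and "partial1 r x y > 0"
proof -
  obtain d where "d > 0" "((\<lambda>t. r t y) has_real_derivative d) (at x)"
    using assms unfolding monotone_chemical2_def by blast
  then show "((\<lambda>t. r t y) has_real_derivative partial1 r x y) (at x)" "partial1 r x y > 0"
    by (simp_all add: partial1_def DERIV_imp_deriv)
qed

lemma monotone_chemical2_partial2:
  assumes "monotone_chemical2 r" and "0 < x" and "0 < y"
  shows "((\<lambda>t. r x t) has_real_derivative partial2 r x y) (at y)" and "partial2 r x y > 0"
proof -
  obtain d where "d > 0" "((\<lambda>t. r x t) has_real_derivative d) (at y)"
    using assms unfolding monotone_chemical2_def by blast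
  then show "((\<lambda>t. r x t) has_real_derivative partial2 r x y) (at y)" "partial2 r x y > 0"
    by (simp_all add: partial2_def DERIV_imp_deriv)
qed

lemma monotone_chemical2_mult: "monotone_chemical2 (\<lambda>x y. x * y)"
  unfolding monotone_chemical2_def
proof (intro conjI allI impI)
  fix x y :: real
  assume "0 < x" "0 < y"
  show "\<exists>d>0. ((\<lambda>t. t * y) has_real_derivative d) (at x)"
    using \<open>0 < y\<close> by (auto intro!: exI[of _ y] derivative_eq_intros)
  show "\<exists>d>0. ((\<lambda>t. x * t) has_real_derivative d) (at y)"
    using \<open>0 < x\<close> by (auto intro!: exI[of _ x] derivative_eq_intros)
qed (auto simp: zero_less_mult_iff)

lemma jacobian2_nonaut_field_homogeneous:
  assumes "((\<lambda>t. r t c) has_real_derivative a) (at c)"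
    and "((\<lambda>t. r c t) has_real_derivative b) (at c)"
  shows "jacobian2 (nonaut_field \<eta> P r) (\<lambda>_. c) = mat2_sym (- (\<eta> * a + b)) (- (\<eta> * b + a))"
  unfolding jacobian2_def mat2_sym_def
  by (rule eq_matI)
    (auto simp: less_2_cases_iff intro!: DERIV_imp_deriv derivative_eq_intros assms)

lemma det_jacobian2_nonaut_eq_0_iff:
  assumes "monotone_chemical2 r" and "0 < c" and "0 < \<eta>" and "\<eta> \<noteq> 1"
  shows "det (jacobian2 (nonaut_field \<eta> P r) (\<lambda>_. c)) = 0 \<longleftrightarrow> partial1 r c c = partial2 r c c"
proof -
  define a b where "a = partial1 r c c" and "b = partial2 r c c"
  have a: "((\<lambda>t. r t c) has_real_derivative a) (at c)" "a > 0"
    unfolding a_def using monotone_chemical2_partial1 assms(1,2) by blast+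
  have b: "((\<lambda>t. r c t) has_real_derivative b) (at c)" "b > 0"
    unfolding b_def using monotone_chemical2_partial2 assms(1,2) by blast+
  have "det (jacobian2 (nonaut_field \<eta> P r) (\<lambda>_. c)) = (\<eta> - 1) * (\<eta> + 1) * (a + b) * (a - b)"
    by (simp add: jacobian2_nonaut_field_homogeneous[OF a(1) b(1)] det_mat2_sym algebra_simps)
  moreover have "(\<eta> - 1) * (\<eta> + 1) * (a + b) \<noteq> 0"
    using assms a(2) b(2) by auto
  ultimately show ?thesis
    unfolding a_def b_def by auto
qed

lemma nonaut_zero_eig_capacity:
  assumes "0 < \<eta>"
  shows "nonaut_zero_eig_capacity \<eta>"
proof -
  let ?r = "\<lambda>x y :: real. x * y"
  have "((\<lambda>t. ?r t 1) has_real_derivative 1) (at 1)" "((\<lambda>t. ?r 1 t) has_real_derivative 1) (at 1)"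
    by (auto intro!: derivative_eq_intros)
  then have "jacobian2 (nonaut_field \<eta> (\<eta> + 1) ?r) (\<lambda>_. 1) = mat2_sym (- (\<eta> * 1 + 1)) (- (\<eta> * 1 + 1))"
    by (rule jacobian2_nonaut_field_homogeneous)
  then have "det (jacobian2 (nonaut_field \<eta> (\<eta> + 1) ?r) (\<lambda>_. 1)) = 0"
    by (simp add: det_mat2_sym)
  moreover have "nonaut_field \<eta> (\<eta> + 1) ?r (\<lambda>_. 1) m = 0" for m
    by (cases m) auto
  ultimately show ?thesis
    unfolding nonaut_zero_eig_capacity_def using assms monotone_chemical2_mult
    by (intro exI[of _ ?r] exI[of _ "\<eta> + 1"] exI[of _ 1]) simp
qed

lemma CS_triple_nonaut:
  "CS_triple nonaut_reactant [L1, L2] [R1, R2]"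
  "CS_triple nonaut_reactant [L1, L2] [R2, R1]"
  unfolding CS_triple_def by (auto simp: less_Suc_eq)

lemma CS_matrix_nonaut:
  "CS_matrix (nonaut_stoich \<eta>) [L1, L2] [R1, R2] = mat2_sym (- \<eta>) (- 1)"
  "CS_matrix (nonaut_stoich \<eta>) [L1, L2] [R2, R1] = mat2_sym (- 1) (- \<eta>)"
  unfolding CS_matrix_def mat2_sym_def by (rule eq_matI; auto simp: less_2_cases_iff)+

lemma nonaut_instability_motif:
  assumes "0 < \<eta>" and "\<eta> \<noteq> 1"
  shows "\<exists>ks js. CS_triple nonaut_reactant ks js
          \<and> unstable_positive_feedback (CS_matrix (nonaut_stoich \<eta>) ks js)
          \<and> non_autocatalytic (CS_matrix (nonaut_stoich \<eta>) ks js)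
          \<and> set ks = {L1, L2} \<and> set js = {R1, R2}"
proof (cases "\<eta> < 1")
  case True
  then show ?thesis
    using assms unstable_positive_feedback_mat2_sym[of \<eta> 1] not_Metzler_mat2_sym
    by (intro exI[of _ "[L1, L2]"] exI[of _ "[R1, R2]"])
      (simp add: CS_triple_nonaut CS_matrix_nonaut non_autocatalytic_def)
next
  case False
  then show ?thesis
    using assms unstable_positive_feedback_mat2_sym[of 1 \<eta>] not_Metzler_mat2_sym
    by (intro exI[of _ "[L1, L2]"] exI[of _ "[R2, R1]"])
      (auto simp: CS_triple_nonaut CS_matrix_nonaut non_autocatalytic_def)
qed

theorem proposition4p3:
  fixes \<eta> :: real
  assumes "\<eta> > 0" and "\<eta> \<noteq> 1"
  shows "nonaut_zero_eig_capacity \<eta>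
    \<and> (\<forall>r P c. monotone_chemical2 r \<longrightarrow> P > 0 \<longrightarrow> c > 0 \<longrightarrow>
          (\<forall>m. nonaut_field \<eta> P r (\<lambda>_. c) m = 0) \<longrightarrow>
          (det (jacobian2 (nonaut_field \<eta> P r) (\<lambda>_. c)) = 0 \<longleftrightarrow> partial1 r c c = partial2 r c c))
    \<and> (\<exists>ks js. CS_triple nonaut_reactant ks js
          \<and> unstable_positive_feedback (CS_matrix (nonaut_stoich \<eta>) ks js)
          \<and> non_autocatalytic (CS_matrix (nonaut_stoich \<eta>) ks js)
          \<and> set ks = {L1, L2} \<and> set js = {R1, R2})"
  using assms nonaut_zero_eig_capacity det_jacobian2_nonaut_eq_0_iff nonaut_instability_motif
  by blast

end
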